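(* Let $G=(V,E)$ be a connected undirected unweighted graph on $N\ge1$ vertices such that every vertex has degree $d_1$ or $d_2$, where $d_1\le d_2$. Let $n_1$ be the number of vertices of degree $d_1$ and $n_2$ the number of vertices of degree $d_2$ (so $N=n_1+n_2$). For $\delta\in[0,1]$ let $\rho_1(\delta)=\mathsf{fp}_{r=1}^\delta(G,\{u\})$ for any $u$ with $\deg(u)=d_1$ and $\rho_2(\delta)=\mathsf{fp}_{r=1}^\delta(G,\{u\})$ for any $u$ with $\deg(u)=d_2$. Then for all $\delta\in[0,1]$ the derivatives $\rho_1'(\delta)$ and $\rho_2'(\delta)$ exist and $$\rho_1'(\delta)=-n_2\,Q(\delta),\qquad\rho_2'(\delta)=n_1\,Q(\delta),\qquad Q(\delta)=\frac{(d_2-d_1)(d_1+d_2)}{D(\delta)^2},$$ where $D(\delta)=d_1n_2+d_2n_1+\delta(d_1-d_2)(n_1-n_2)$. If $d_1<d_2$, then $\rho_1'(\delta)<0$ and $\rho_2'(\delta)>0$ for all $\delta\in[0,1]$; otherwise $\rho_1'(\delta)=\rho_2'(\delta)=0$ for all $\delta$.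
   Context: Mixed $\delta$-updating on $G$: each vertex holds a mutant (fitness $r$) or wild-type (fitness $1$); $f_S(x)$ is the fitness at $x$ when $S$ is the mutant set. At each step, with probability $\delta$ a death-Birth step: choose $v$ uniformly to die, choose a neighbor $u$ of $v$ with probability proportional to $f_S(u)$, $u$ copies its type onto $v$; with probability $1-\delta$ a Birth-death step: choose $u$ with probability proportional to $f_S(u)$ among all vertices, choose a uniformly random neighbor $v$ of $u$, $u$ copies its type onto $v$. $\mathsf{fp}_r^\delta(G,S_0)$ is the probability all vertices eventually become mutant from initial mutant set $S_0$ (with $r=1$, the value for a single starting vertex depends only on its degree here). *)

theory Defs
  imports "HOL-Analysis.Analysis"
begin

definition simple_graph :: "'a set \<Rightarrow> ('a \<Rightarrow> 'a \<Rightarrow> bool) \<Rightarrow> bool" where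
  "simple_graph V E \<longleftrightarrow> finite V \<and> (\<forall>u v. E u v \<longrightarrow> u \<in> V \<and> v \<in> V)
     \<and> (\<forall>u v. E u v \<longrightarrow> E v u) \<and> (\<forall>u. \<not> E u u)"

definition connected_graph :: "'a set \<Rightarrow> ('a \<Rightarrow> 'a \<Rightarrow> bool) \<Rightarrow> bool" where
  "connected_graph V E \<longleftrightarrow> (\<forall>u\<in>V. \<forall>v\<in>V. E\<^sup>*\<^sup>* u v)"

definition nbrs :: "'a set \<Rightarrow> ('a \<Rightarrow> 'a \<Rightarrow> bool) \<Rightarrow> 'a \<Rightarrow> 'a set" where
  "nbrs V E v = {u \<in> V. E v u}"

definition deg :: "'a set \<Rightarrow> ('a \<Rightarrow> 'a \<Rightarrow> bool) \<Rightarrow> 'a \<Rightarrow> nat" where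
  "deg V E v = card (nbrs V E v)"

definition fit :: "real \<Rightarrow> 'a set \<Rightarrow> 'a \<Rightarrow> real" where
  "fit r S x = (if x \<in> S then r else 1)"

text \<open>Ordered pairs (u,v) with u adjacent to v: u reproduces onto v.\<close>
definition arcs :: "'a set \<Rightarrow> ('a \<Rightarrow> 'a \<Rightarrow> bool) \<Rightarrow> ('a \<times> 'a) set" where
  "arcs V E = {(u, v). u \<in> V \<and> v \<in> V \<and> E u v}"

text \<open>Probability that in one step of mixed delta-updating, u copies its type onto v:
 with probability delta a death-Birth step (v dies uniformly, then neighbour u chosen
 proportional to fitness), with probability 1-delta a Birth-death step (u chosen
 proportional to fitness among all vertices, then v a uniform neighbour of u).\<close>
definition step_prob :: "'a set \<Rightarrow> ('a \<Rightarrow> 'a \<Rightarrow> bool) \<Rightarrow> real \<Rightarrow> real \<Rightarrow> 'a set \<Rightarrow> 'a \<Rightarrow> 'a \<Rightarrow> real" where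
  "step_prob V E r \<delta> S u v =
     \<delta> * (1 / real (card V)) * (fit r S u / (\<Sum>w\<in>nbrs V E v. fit r S w))
   + (1 - \<delta>) * (fit r S u / (\<Sum>w\<in>V. fit r S w)) * (1 / real (deg V E u))"

definition copy_type :: "'a set \<Rightarrow> 'a \<Rightarrow> 'a \<Rightarrow> 'a set" where
  "copy_type S u v = (if u \<in> S then insert v S else S - {v})"

text \<open>hit n S: probability that, starting from mutant set S, all vertices are mutant
 at some time \<le> n.\<close>
primrec hit :: "'a set \<Rightarrow> ('a \<Rightarrow> 'a \<Rightarrow> bool) \<Rightarrow> real \<Rightarrow> real \<Rightarrow> nat \<Rightarrow> 'a set \<Rightarrow> real" where
  "hit V E r \<delta> 0 S = (if S = V then 1 else 0)"
| "hit V E r \<delta> (Suc n) S = (if S = V then 1 else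
     (\<Sum>(u, v)\<in>arcs V E. step_prob V E r \<delta> S u v * hit V E r \<delta> n (copy_type S u v)))"

text \<open>Fixation probability fp_r^delta(G, S0): probability that all vertices eventually
 become mutant (limit of the non-decreasing sequence hit n S0).\<close>
definition fp :: "'a set \<Rightarrow> ('a \<Rightarrow> 'a \<Rightarrow> bool) \<Rightarrow> real \<Rightarrow> real \<Rightarrow> 'a set \<Rightarrow> real" where
  "fp V E r \<delta> S0 = lim (\<lambda>n. hit V E r \<delta> n S0)"

end

theory Submission
  imports Defs
begin

(* With neutral fitness the probability p(u,v) that u replaces v in one step,
   (\<delta>/deg v + (1-\<delta>)/deg u)/N, does not depend on the mutant set.  If a vertex weight w
   satisfies detailed balance p(u,v) w(v) = p(v,u) w(u) on every edge, the total mutant weight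
   W(S) is harmonic for the process; since a harmonic function on a connected graph is determined
   by its values at the empty and the full set (maximum principle), the fixation probability
   is W(S)/W(V).  When only the degrees d1 and d2 occur, w(x) = \<delta> deg x + (1-\<delta>)(d1+d2-deg x)
   is such a weight, so fp({u}) is a quotient of affine functions of \<delta> with denominator
   W(V) = D(\<delta>), and the quotient rule gives the derivatives. *)

lemma arcs_eq_Sigma: "arcs V E = Sigma V (nbrs V E)"
  by (auto simp: arcs_def nbrs_def)

lemma finite_arcs: "simple_graph V E \<Longrightarrow> finite (arcs V E)"
  unfolding arcs_eq_Sigma simple_graph_def nbrs_def by auto

lemma sum_arcs_eq_sum_nbrs:
  assumes "finite V"
  shows "(\<Sum>(u, v)\<in>arcs V E. f u v) = (\<Sum>u\<in>V. \<Sum>v\<in>nbrs V E u. f u v)"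
  unfolding arcs_eq_Sigma
  by (rule sum.Sigma[symmetric]) (use assms in \<open>auto simp: nbrs_def\<close>)

lemma sum_arcs_swap:
  assumes "simple_graph V E"
  shows "(\<Sum>(u, v)\<in>arcs V E. f u v) = (\<Sum>(u, v)\<in>arcs V E. f v u)"
  by (rule sum.reindex_bij_witness[where i=prod.swap and j=prod.swap])
     (use assms in \<open>auto simp: arcs_def simple_graph_def\<close>)

lemma deg_pos_if_arc:
  assumes "simple_graph V E" "(u, v) \<in> arcs V E"
  shows "deg V E u \<ge> 1"
proof -
  have "v \<in> nbrs V E u" "finite (nbrs V E u)"
    using assms by (auto simp: arcs_def nbrs_def simple_graph_def)
  then show ?thesis
    unfolding deg_def by (metis One_nat_def Suc_leI card_gt_0_iff empty_iff)
qed

lemma rtranclp_exits_set: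
  assumes "E\<^sup>*\<^sup>* x y" "x \<in> S" "y \<notin> S"
  obtains a b where "E a b" "a \<in> S" "b \<notin> S"
  using assms
proof (induction arbitrary: thesis rule: rtranclp_induct)
  case (step y z)
  then show ?case
    by (cases "y \<in> S") auto
qed simp

lemma arc_leaving:
  assumes "simple_graph V E" "connected_graph V E" "S \<subseteq> V" "S \<noteq> {}" "S \<noteq> V"
  obtains a b where "(a, b) \<in> arcs V E" "a \<in> S" "b \<notin> S"
proof -
  obtain x y where "x \<in> S" "y \<in> V" "y \<notin> S"
    using assms(3-5) by blast
  moreover have "E\<^sup>*\<^sup>* x y"
    using assms(2,3) calculation by (auto simp: connected_graph_def)
  ultimately obtain a b where "E a b" "a \<in> S" "b \<notin> S"
    using rtranclp_exits_set by metis
  with assms(1) show ?thesis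
    using that by (auto simp: arcs_def simple_graph_def)
qed

lemma deg_pos_if_connected:
  assumes "simple_graph V E" "connected_graph V E" "card V \<ge> 2" "u \<in> V"
  shows "deg V E u \<ge> 1"
proof -
  have "{u} \<noteq> V"
    using assms(3) by auto
  then obtain a b where "(a, b) \<in> arcs V E" "a \<in> {u}"
    using arc_leaving[OF assms(1,2), of "{u}"] assms(4) by blast
  then show ?thesis
    using deg_pos_if_arc[OF assms(1)] by blast
qed

lemma fit_pos: "r > 0 \<Longrightarrow> fit r S x > 0"
  by (simp add: fit_def)

lemma fp_full: "fp V E r \<delta> V = 1"
proof -
  have "hit V E r \<delta> n V = 1" for n
    by (cases n) simp_all
  then show ?thesis
    by (simp add: fp_def)
qed

locale mixed_updating =
  fixes V :: "'a set" and E :: "'a \<Rightarrow> 'a \<Rightarrow> bool" and r \<delta> :: real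
  assumes simple: "simple_graph V E" and connected: "connected_graph V E"
    and two_vertices: "card V \<ge> 2"
    and fitness_pos: "r > 0" and delta_nonneg: "0 \<le> \<delta>" and delta_le_1: "\<delta> \<le> 1"
begin

lemma finite_V: "finite V"
  using simple by (simp add: simple_graph_def)

lemma card_V_pos: "real (card V) > 0"
  using two_vertices by simp

lemma deg_pos: "u \<in> V \<Longrightarrow> deg V E u \<ge> 1"
  using deg_pos_if_connected[OF simple connected two_vertices] .

lemma sum_fit_nbrs_pos:
  assumes "v \<in> V"
  shows "(\<Sum>w\<in>nbrs V E v. fit r S w) > 0"
proof -
  have "nbrs V E v \<noteq> {}"
    using deg_pos[OF assms] by (auto simp: deg_def)
  then show ?thesis
    using finite_V fitness_pos by (intro sum_pos fit_pos) (auto simp: nbrs_def)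
qed

lemma sum_fit_pos: "(\<Sum>w\<in>V. fit r S w) > 0"
  using finite_V two_vertices fitness_pos by (intro sum_pos fit_pos) auto

lemma step_prob_nonneg: "step_prob V E r \<delta> S u v \<ge> 0"
  using fitness_pos delta_nonneg delta_le_1 unfolding step_prob_def
  by (intro add_nonneg_nonneg mult_nonneg_nonneg divide_nonneg_nonneg sum_nonneg
        less_imp_le[OF fit_pos]) auto

lemma step_prob_pos:
  assumes "(u, v) \<in> arcs V E"
  shows "step_prob V E r \<delta> S u v > 0"
proof -
  have "u \<in> V" "v \<in> V"
    using assms by (auto simp: arcs_def)
  define death_birth where "death_birth = 1 / real (card V) * (fit r S u / (\<Sum>w\<in>nbrs V E v. fit r S w))"
  define birth_death where "birth_death = fit r S u / (\<Sum>w\<in>V. fit r S w) * (1 / real (deg V E u))"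
  have "death_birth > 0" "birth_death > 0"
    unfolding death_birth_def birth_death_def
    using card_V_pos fitness_pos sum_fit_nbrs_pos[OF \<open>v \<in> V\<close>] sum_fit_pos deg_pos[OF \<open>u \<in> V\<close>]
    by (auto intro!: mult_pos_pos divide_pos_pos fit_pos)
  then have "\<delta> * death_birth + (1 - \<delta>) * birth_death > 0"
    using delta_nonneg delta_le_1
    by (cases "\<delta> = 0") (auto intro: add_pos_nonneg)
  then show ?thesis
    by (simp add: step_prob_def death_birth_def birth_death_def mult.assoc)
qed

lemma sum_step_prob: "(\<Sum>(u, v)\<in>arcs V E. step_prob V E r \<delta> S u v) = 1"
proof -
  let ?F = "\<lambda>v. \<Sum>w\<in>nbrs V E v. fit r S w"
  have death_birth: "(\<Sum>(u, v)\<in>arcs V E. fit r S u / ?F v) = real (card V)"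
  proof -
    have "(\<Sum>(u, v)\<in>arcs V E. fit r S u / ?F v) = (\<Sum>u\<in>V. \<Sum>v\<in>nbrs V E u. fit r S v / ?F u)"
      by (subst sum_arcs_swap[OF simple]) (simp add: sum_arcs_eq_sum_nbrs[OF finite_V])
    also have "\<dots> = (\<Sum>u\<in>V. 1)"
      using sum_fit_nbrs_pos by (intro sum.cong) (auto simp: sum_divide_distrib[symmetric] less_imp_neq[symmetric])
    finally show ?thesis by simp
  qed
  have birth_death:
    "(\<Sum>(u, v)\<in>arcs V E. fit r S u / (\<Sum>w\<in>V. fit r S w) * (1 / real (deg V E u))) = 1"
  proof -
    have "(\<Sum>(u, v)\<in>arcs V E. fit r S u / (\<Sum>w\<in>V. fit r S w) * (1 / real (deg V E u)))
        = (\<Sum>u\<in>V. fit r S u / (\<Sum>w\<in>V. fit r S w))"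
      unfolding sum_arcs_eq_sum_nbrs[OF finite_V]
      using deg_pos by (intro sum.cong refl) (fastforce simp: deg_def)
    also have "\<dots> = 1"
      using sum_fit_pos[of S] by (simp add: sum_divide_distrib[symmetric])
    finally show ?thesis .
  qed
  have "(\<Sum>(u, v)\<in>arcs V E. step_prob V E r \<delta> S u v)
      = \<delta> / real (card V) * (\<Sum>(u, v)\<in>arcs V E. fit r S u / ?F v)
        + (1 - \<delta>) * (\<Sum>(u, v)\<in>arcs V E. fit r S u / (\<Sum>w\<in>V. fit r S w) * (1 / real (deg V E u)))"
    by (simp add: step_prob_def sum.distrib sum_distrib_left case_prod_unfold mult.assoc)
  then show ?thesis
    using death_birth birth_death card_V_pos by simp
qed

lemma hit_nonneg: "hit V E r \<delta> n S \<ge> 0"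
  by (induction n arbitrary: S) (auto intro!: sum_nonneg mult_nonneg_nonneg step_prob_nonneg)

lemma hit_le_1: "hit V E r \<delta> n S \<le> 1"
proof (induction n arbitrary: S)
  case (Suc n)
  have "(\<Sum>(u, v)\<in>arcs V E. step_prob V E r \<delta> S u v * hit V E r \<delta> n (copy_type S u v))
      \<le> (\<Sum>(u, v)\<in>arcs V E. step_prob V E r \<delta> S u v)"
    by (rule sum_mono) (auto intro!: mult_right_le_one_le step_prob_nonneg hit_nonneg Suc)
  then show ?case
    by (simp add: sum_step_prob)
qed simp

lemma hit_le_hit_Suc: "hit V E r \<delta> n S \<le> hit V E r \<delta> (Suc n) S"
proof (induction n arbitrary: S)
  case 0
  show ?case
    by (simp add: sum_nonneg step_prob_nonneg case_prod_unfold)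
next
  case (Suc n)
  show ?case
    by (subst (1 2) hit.simps(2))
       (auto simp del: hit.simps(2) intro!: sum_mono mult_left_mono step_prob_nonneg Suc)
qed

lemma hit_tendsto_fp: "(\<lambda>n. hit V E r \<delta> n S) \<longlonglongrightarrow> fp V E r \<delta> S"
proof -
  have "(\<lambda>n. hit V E r \<delta> n S) \<longlonglongrightarrow> (SUP n. hit V E r \<delta> n S)"
    by (rule LIMSEQ_incseq_SUP) (auto intro: hit_le_1 incseq_SucI hit_le_hit_Suc)
  then show ?thesis
    unfolding fp_def by (metis limI)
qed

lemma fp_empty: "fp V E r \<delta> {} = 0"
proof -
  have "V \<noteq> {}"
    using two_vertices by auto
  then have "hit V E r \<delta> n {} = 0" for n
    by (induction n) (auto simp: copy_type_def)
  then show ?thesis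
    by (simp add: fp_def)
qed

definition harmonic :: "('a set \<Rightarrow> real) \<Rightarrow> bool" where
  "harmonic f \<longleftrightarrow> (\<forall>S. S \<subseteq> V \<longrightarrow> S \<noteq> {} \<longrightarrow> S \<noteq> V \<longrightarrow>
     f S = (\<Sum>(u, v)\<in>arcs V E. step_prob V E r \<delta> S u v * f (copy_type S u v)))"

lemma harmonic_fp: "harmonic (fp V E r \<delta>)"
  unfolding harmonic_def
proof (intro allI impI)
  fix S :: "'a set"
  assume "S \<noteq> V"
  have "(\<lambda>n. hit V E r \<delta> (Suc n) S) \<longlonglongrightarrow> fp V E r \<delta> S"
    using hit_tendsto_fp LIMSEQ_Suc by blast
  moreover have "(\<lambda>n. hit V E r \<delta> (Suc n) S)
      \<longlonglongrightarrow> (\<Sum>(u, v)\<in>arcs V E. step_prob V E r \<delta> S u v * fp V E r \<delta> (copy_type S u v))"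
    using \<open>S \<noteq> V\<close> unfolding hit.simps(2) case_prod_unfold
    by (simp add: tendsto_sum tendsto_mult_left hit_tendsto_fp)
  ultimately show "fp V E r \<delta> S
      = (\<Sum>(u, v)\<in>arcs V E. step_prob V E r \<delta> S u v * fp V E r \<delta> (copy_type S u v))"
    by (rule LIMSEQ_unique)
qed

lemma harmonic_diff: "harmonic f \<Longrightarrow> harmonic g \<Longrightarrow> harmonic (\<lambda>S. f S - g S)"
  by (simp add: harmonic_def right_diff_distrib sum_subtractf case_prod_unfold)

lemma harmonic_maximum_principle:
  assumes "harmonic f" "f {} \<le> 0" "f V \<le> 0" "S \<subseteq> V"
  shows "f S \<le> 0"
proof -
  define M where "M = Max (f ` Pow V)"
  have le_M: "f X \<le> M" if "X \<subseteq> V" for X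
    unfolding M_def using finite_V that by (intro Max_ge) auto
  define T where "T = {X \<in> Pow V. f X = M}"
  have "M \<in> f ` Pow V"
    unfolding M_def using finite_V by (intro Max_in) auto
  then have "T \<noteq> {}"
    by (auto simp: T_def)
  have "finite T"
    using finite_V by (simp add: T_def)
  \<comment> \<open>Among the maximisers take one of largest size: the chain cannot move upwards from it
      without losing value, which contradicts harmonicity.\<close>
  have "Max (card ` T) \<in> card ` T"
    using \<open>finite T\<close> \<open>T \<noteq> {}\<close> by (intro Max_in) auto
  then obtain S0 where S0: "S0 \<subseteq> V" "f S0 = M" and "card S0 = Max (card ` T)"
    by (auto simp: T_def)
  have S0_largest: "card X \<le> card S0" if "X \<in> T" for X
    using that \<open>card S0 = Max (card ` T)\<close> \<open>finite T\<close> by simp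
  have "M \<le> 0"
  proof (rule ccontr)
    assume "\<not> M \<le> 0"
    then have "S0 \<noteq> {}" "S0 \<noteq> V"
      using S0 assms(2,3) by auto
    then obtain a b where ab: "(a, b) \<in> arcs V E" "a \<in> S0" "b \<notin> S0"
      using arc_leaving[OF simple connected S0(1)] by blast
    have copy_ab: "copy_type S0 a b = insert b S0" and "insert b S0 \<subseteq> V"
      using ab S0(1) by (auto simp: copy_type_def arcs_def)
    have "card (insert b S0) > card S0"
      using ab(3) finite_subset[OF S0(1) finite_V] by simp
    then have "insert b S0 \<notin> T"
      using S0_largest[of "insert b S0"] by linarith
    then have below: "f (copy_type S0 a b) < M"
      using le_M[OF \<open>insert b S0 \<subseteq> V\<close>] \<open>insert b S0 \<subseteq> V\<close>
      by (simp add: copy_ab T_def order_less_le)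
    have copy_in_V: "copy_type S0 u v \<subseteq> V" if "(u, v) \<in> arcs V E" for u v
      using S0(1) that by (auto simp: copy_type_def arcs_def)
    have "M = (\<Sum>(u, v)\<in>arcs V E. step_prob V E r \<delta> S0 u v * f (copy_type S0 u v))"
      using assms(1) S0 \<open>S0 \<noteq> {}\<close> \<open>S0 \<noteq> V\<close> by (simp add: harmonic_def)
    also have "\<dots> < (\<Sum>(u, v)\<in>arcs V E. step_prob V E r \<delta> S0 u v * M)"
    proof (rule sum_strict_mono_ex1[OF finite_arcs[OF simple]])
      show "\<forall>x\<in>arcs V E. (case x of (u, v) \<Rightarrow> step_prob V E r \<delta> S0 u v * f (copy_type S0 u v))
          \<le> (case x of (u, v) \<Rightarrow> step_prob V E r \<delta> S0 u v * M)"
        using copy_in_V le_M by (auto intro!: mult_left_mono step_prob_nonneg)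
      show "\<exists>x\<in>arcs V E. (case x of (u, v) \<Rightarrow> step_prob V E r \<delta> S0 u v * f (copy_type S0 u v))
          < (case x of (u, v) \<Rightarrow> step_prob V E r \<delta> S0 u v * M)"
        using ab(1) below step_prob_pos[OF ab(1)] by (intro bexI[of _ "(a, b)"]) auto
    qed
    also have "\<dots> = M"
      using sum_step_prob[of S0] by (simp add: sum_distrib_right[symmetric] case_prod_unfold)
    finally show False
      by simp
  qed
  then show ?thesis
    using le_M[OF assms(4)] by simp
qed

lemma harmonic_unique:
  assumes "harmonic f" "harmonic g" "f {} = g {}" "f V = g V" "S \<subseteq> V"
  shows "f S = g S"
proof -
  have "f S - g S \<le> 0"
    by (rule harmonic_maximum_principle[OF harmonic_diff[OF assms(1,2)]]) (use assms(3-5) in auto)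
  moreover have "g S - f S \<le> 0"
    by (rule harmonic_maximum_principle[OF harmonic_diff[OF assms(2,1)]]) (use assms(3-5) in auto)
  ultimately show ?thesis
    by simp
qed

lemma harmonic_divide: "harmonic f \<Longrightarrow> harmonic (\<lambda>S. f S / c)"
  by (simp add: harmonic_def sum_divide_distrib case_prod_unfold)

definition detailed_balance :: "('a \<Rightarrow> real) \<Rightarrow> bool" where
  "detailed_balance w \<longleftrightarrow> (\<forall>S u v. (u, v) \<in> arcs V E \<longrightarrow>
     step_prob V E r \<delta> S u v * w v = step_prob V E r \<delta> S v u * w u)"

lemma harmonic_sum_weight:
  assumes "detailed_balance w"
  shows "harmonic (sum w)"
  unfolding harmonic_def
proof (intro allI impI)
  fix S :: "'a set"
  assume "S \<subseteq> V"
  let ?p = "step_prob V E r \<delta> S"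
  \<comment> \<open>The expected gain of weight through the arc (u, v), cancelled by detailed balance
      against the expected loss through (v, u).\<close>
  define gain where "gain u v = ?p u v * (if u \<in> S \<and> v \<notin> S then w v else 0)" for u v
  have arc_step: "?p u v * sum w (copy_type S u v) = ?p u v * sum w S + (gain u v - gain v u)"
    if "(u, v) \<in> arcs V E" for u v
  proof -
    have "?p v u * w u = ?p u v * w v"
      using assms that unfolding detailed_balance_def by metis
    moreover have "finite S"
      using \<open>S \<subseteq> V\<close> finite_V finite_subset by blast
    ultimately show ?thesis
      by (cases "u \<in> S"; cases "v \<in> S")
         (simp_all add: gain_def copy_type_def sum_diff1 insert_absorb algebra_simps)
  qed
  have "(\<Sum>(u, v)\<in>arcs V E. ?p u v * sum w (copy_type S u v))
      = (\<Sum>(u, v)\<in>arcs V E. ?p u v * sum w S + (gain u v - gain v u))"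
    using arc_step by (intro sum.cong) auto
  also have "\<dots> = sum w S * (\<Sum>(u, v)\<in>arcs V E. ?p u v)
      + ((\<Sum>(u, v)\<in>arcs V E. gain u v) - (\<Sum>(u, v)\<in>arcs V E. gain v u))"
    by (simp add: sum.distrib sum_subtractf sum_distrib_left case_prod_unfold mult.commute)
  also have "\<dots> = sum w S"
    using sum_step_prob[of S] sum_arcs_swap[OF simple, of gain] by simp
  finally show "sum w S = (\<Sum>(u, v)\<in>arcs V E. ?p u v * sum w (copy_type S u v))"
    by simp
qed

lemma fp_eq_weight_ratio:
  assumes "detailed_balance w" "sum w V \<noteq> 0" "S \<subseteq> V"
  shows "fp V E r \<delta> S = sum w S / sum w V"
  by (rule harmonic_unique[OF harmonic_fp harmonic_divide[OF harmonic_sum_weight[OF assms(1)]] _ _ assms(3)])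
     (use assms(2) in \<open>simp_all add: fp_empty fp_full\<close>)

end

lemma step_prob_neutral:
  "step_prob V E 1 \<delta> S u v
     = \<delta> / (real (card V) * real (deg V E v)) + (1 - \<delta>) / (real (card V) * real (deg V E u))"
  by (simp add: step_prob_def fit_def deg_def)

\<comment> \<open>\<delta> times the own degree plus 1 - \<delta> times the other degree: for an edge between the two
    degree classes both sides of detailed balance then become the same product of two factors.\<close>
definition two_degree_weight :: "'a set \<Rightarrow> ('a \<Rightarrow> 'a \<Rightarrow> bool) \<Rightarrow> nat \<Rightarrow> nat \<Rightarrow> real \<Rightarrow> 'a \<Rightarrow> real" where
  "two_degree_weight V E d1 d2 \<delta> x
     = \<delta> * real (deg V E x) + (1 - \<delta>) * (real d1 + real d2 - real (deg V E x))"

locale neutral_updating = mixed_updating V E 1 \<delta> for V :: "'a set" and E \<delta>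
begin

lemma detailed_balance_const: "\<forall>v\<in>V. deg V E v = d \<Longrightarrow> detailed_balance (\<lambda>_. 1)"
  by (auto simp: detailed_balance_def step_prob_neutral arcs_def)

lemma detailed_balance_two_degree_weight:
  assumes "\<forall>v\<in>V. deg V E v = d1 \<or> deg V E v = d2"
  shows "detailed_balance (two_degree_weight V E d1 d2 \<delta>)"
  unfolding detailed_balance_def
proof (intro allI impI)
  fix S u v
  assume arc: "(u, v) \<in> arcs V E"
  then have "u \<in> V" "v \<in> V"
    by (auto simp: arcs_def)
  then have "real (deg V E u) > 0" "real (deg V E v) > 0"
    using deg_pos by force+
  from assms \<open>u \<in> V\<close> \<open>v \<in> V\<close>
  have "deg V E u = d1 \<or> deg V E u = d2" "deg V E v = d1 \<or> deg V E v = d2"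
    by auto
  then show "step_prob V E 1 \<delta> S u v * two_degree_weight V E d1 d2 \<delta> v
      = step_prob V E 1 \<delta> S v u * two_degree_weight V E d1 d2 \<delta> u"
    using \<open>real (deg V E u) > 0\<close> \<open>real (deg V E v) > 0\<close> card_V_pos
    unfolding step_prob_neutral two_degree_weight_def
    by (elim disjE) (simp_all add: field_simps; algebra)+
qed

end

lemma sum_two_degree_weight:
  assumes "finite V" "d1 < d2" "\<forall>v\<in>V. deg V E v = d1 \<or> deg V E v = d2"
  shows "sum (two_degree_weight V E d1 d2 \<delta>) V
    = real d1 * real (card {v \<in> V. deg V E v = d2}) + real d2 * real (card {v \<in> V. deg V E v = d1})
      + \<delta> * (real d1 - real d2) * (real (card {v \<in> V. deg V E v = d1}) - real (card {v \<in> V. deg V E v = d2}))"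
proof -
  let ?w1 = "real d2 + \<delta> * (real d1 - real d2)" and ?w2 = "real d1 + \<delta> * (real d2 - real d1)"
  have "sum (two_degree_weight V E d1 d2 \<delta>) V = (\<Sum>x\<in>V. if deg V E x = d1 then ?w1 else ?w2)"
    using assms(2,3) by (intro sum.cong) (auto simp: two_degree_weight_def algebra_simps)
  also have "\<dots> = real (card (V \<inter> {x. deg V E x = d1})) * ?w1 + real (card (V \<inter> - {x. deg V E x = d1})) * ?w2"
    using assms(1) by (simp add: sum.If_cases)
  also have "V \<inter> {x. deg V E x = d1} = {v \<in> V. deg V E v = d1}"
    by auto
  also have "V \<inter> - {x. deg V E x = d1} = {v \<in> V. deg V E v = d2}"
    using assms(2,3) by auto
  finally show ?thesis
    by (simp add: algebra_simps)
qed

lemma card_degree_class_pos: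
  assumes "finite V" "\<exists>v\<in>V. deg V E v = d"
  shows "card {v \<in> V. deg V E v = d} \<ge> 1"
  using assms by (simp add: Suc_le_eq card_gt_0_iff) blast

lemma two_degree_denominator_pos:
  fixes \<delta> :: real and d1 d2 n1 n2 :: nat
  assumes "d1 < d2" "n1 \<ge> 1" "n2 \<ge> 1" "0 \<le> \<delta>" "\<delta> \<le> 1"
  shows "real d1 * real n2 + real d2 * real n1 + \<delta> * (real d1 - real d2) * (real n1 - real n2) > 0"
proof -
  have "d2 * n1 \<ge> 1" "d2 * n2 \<ge> 1"
    using assms(1-3) by (simp_all add: Suc_le_eq)
  then have "real d2 * real n1 \<ge> 1" "real d2 * real n2 \<ge> 1"
    by (metis of_nat_1 of_nat_le_iff of_nat_mult)+
  then have "real d1 * real n2 + real d2 * real n1 \<ge> 1" "real d1 * real n1 + real d2 * real n2 \<ge> 1"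
    by (auto intro: add_increasing add_increasing2)
  then have "(1 - \<delta>) * (real d1 * real n2 + real d2 * real n1) + \<delta> * (real d1 * real n1 + real d2 * real n2)
      \<ge> (1 - \<delta>) * 1 + \<delta> * 1"
    using assms(4,5) by (intro add_mono mult_left_mono) auto
  then show ?thesis
    by (simp add: algebra_simps)
qed

lemma fp_singleton_regular:
  assumes "simple_graph V E" "connected_graph V E" "\<forall>v\<in>V. deg V E v = d" "u \<in> V"
    and "0 \<le> \<delta>" "\<delta> \<le> 1"
  shows "fp V E 1 \<delta> {u} = 1 / real (card V)"
proof (cases "card V \<ge> 2")
  case True
  then interpret neutral_updating V E \<delta>
    by unfold_locales (use assms in auto)
  show ?thesis
    using fp_eq_weight_ratio[OF detailed_balance_const[OF assms(3)], of "{u}"] assms(4) card_V_pos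
    by simp
next
  case False
  have "finite V"
    using assms(1) by (simp add: simple_graph_def)
  with assms(4) have "card V > 0"
    by (auto simp: card_gt_0_iff)
  with False have "card V = 1"
    by linarith
  with assms(4) have "V = {u}"
    by (metis card_1_singletonE singletonD)
  then show ?thesis
    using fp_full by simp
qed

lemma has_real_derivative_fp_singleton_regular:
  assumes "simple_graph V E" "connected_graph V E" "\<forall>v\<in>V. deg V E v = d" "u \<in> V" "\<delta> \<in> {0..1}"
  shows "((\<lambda>t. fp V E 1 t {u}) has_real_derivative 0) (at \<delta> within {0..1})"
proof (rule has_field_derivative_transform_within[OF DERIV_const zero_less_one assms(5)])
  show "1 / real (card V) = fp V E 1 t {u}" if "t \<in> {0..1}" for t
    using fp_singleton_regular[OF assms(1-4)] that by simp
qed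

lemma fp_singleton_two_degrees:
  assumes "simple_graph V E" "connected_graph V E" "d1 < d2"
    and "\<forall>v\<in>V. deg V E v = d1 \<or> deg V E v = d2"
    and "\<exists>v\<in>V. deg V E v = d1" "\<exists>v\<in>V. deg V E v = d2"
    and "u \<in> V" "0 \<le> \<delta>" "\<delta> \<le> 1"
  defines "n1 \<equiv> card {v \<in> V. deg V E v = d1}" and "n2 \<equiv> card {v \<in> V. deg V E v = d2}"
  shows "fp V E 1 \<delta> {u} = two_degree_weight V E d1 d2 \<delta> u
    / (real d1 * real n2 + real d2 * real n1 + \<delta> * (real d1 - real d2) * (real n1 - real n2))"
proof -
  have "finite V"
    using assms(1) by (simp add: simple_graph_def)
  obtain v1 v2 where "v1 \<in> V" "v2 \<in> V" "v1 \<noteq> v2"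
    using assms(3,5,6) by (metis less_irrefl)
  then have "card V \<ge> 2"
    using card_mono[OF \<open>finite V\<close>, of "{v1, v2}"] by simp
  then interpret neutral_updating V E \<delta>
    by unfold_locales (use assms in auto)
  have "sum (two_degree_weight V E d1 d2 \<delta>) V
      = real d1 * real n2 + real d2 * real n1 + \<delta> * (real d1 - real d2) * (real n1 - real n2)"
    unfolding n1_def n2_def using sum_two_degree_weight[OF \<open>finite V\<close> assms(3,4)] .
  moreover have "n1 \<ge> 1" "n2 \<ge> 1"
    unfolding n1_def n2_def using card_degree_class_pos[OF \<open>finite V\<close>] assms(5,6) by blast+
  then have "real d1 * real n2 + real d2 * real n1 + \<delta> * (real d1 - real d2) * (real n1 - real n2) > 0"
    using two_degree_denominator_pos[OF assms(3)] assms(8,9) by blast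
  ultimately show ?thesis
    using fp_eq_weight_ratio[OF detailed_balance_two_degree_weight[OF assms(4)], of "{u}"] assms(7)
    by simp
qed

lemma has_real_derivative_affine_quotient:
  fixes a0 a1 b0 b1 x :: real
  assumes "b0 + x * b1 \<noteq> 0"
  shows "((\<lambda>t. (a0 + t * a1) / (b0 + t * b1)) has_real_derivative
    (a1 * b0 - a0 * b1) / (b0 + x * b1)\<^sup>2) (at x within S)"
proof -
  have "((\<lambda>t. (a0 + t * a1) / (b0 + t * b1)) has_real_derivative
      (a1 * (b0 + x * b1) - b1 * (a0 + x * a1)) / (b0 + x * b1)\<^sup>2) (at x within S)"
    using assms by (auto intro!: derivative_eq_intros simp: power2_eq_square)
  then show ?thesis
    by (simp add: algebra_simps)
qed

lemma has_real_derivative_fp_singleton_two_degrees: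
  assumes "simple_graph V E" "connected_graph V E" "d1 < d2"
    and "\<forall>v\<in>V. deg V E v = d1 \<or> deg V E v = d2"
    and "\<exists>v\<in>V. deg V E v = d1" "\<exists>v\<in>V. deg V E v = d2"
    and "u \<in> V" "\<delta> \<in> {0..1}"
  defines "n1 \<equiv> card {v \<in> V. deg V E v = d1}" and "n2 \<equiv> card {v \<in> V. deg V E v = d2}"
  defines "D \<equiv> (\<lambda>\<delta>::real. real d1 * real n2 + real d2 * real n1
                   + \<delta> * (real d1 - real d2) * (real n1 - real n2))"
  shows "((\<lambda>t. fp V E 1 t {u}) has_real_derivative
    (if deg V E u = d1 then - real n2 else real n1) * ((real d2 - real d1) * (real d1 + real d2) / (D \<delta>)\<^sup>2))
    (at \<delta> within {0..1})"
proof -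
  define a0 where "a0 = real d1 + real d2 - real (deg V E u)"
  define a1 where "a1 = 2 * real (deg V E u) - real d1 - real d2"
  define b0 where "b0 = real d1 * real n2 + real d2 * real n1"
  define b1 where "b1 = (real d1 - real d2) * (real n1 - real n2)"
  have D_eq: "D t = b0 + t * b1" for t
    by (simp add: D_def b0_def b1_def algebra_simps)
  have fp_eq: "(a0 + t * a1) / (b0 + t * b1) = fp V E 1 t {u}" if "t \<in> {0..1}" for t
    using fp_singleton_two_degrees[OF assms(1-7), of t] that D_eq[of t, unfolded D_def]
    unfolding n1_def n2_def a0_def a1_def two_degree_weight_def by (simp add: algebra_simps)
  have "finite V"
    using assms(1) by (simp add: simple_graph_def)
  then have "n1 \<ge> 1" "n2 \<ge> 1"
    unfolding n1_def n2_def using card_degree_class_pos assms(5,6) by blast+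
  then have "D \<delta> > 0"
    unfolding D_def using two_degree_denominator_pos[OF assms(3)] assms(8) by simp
  have "a1 * b0 - a0 * b1 = (if deg V E u = d1 then - real n2 else real n1) * ((real d2 - real d1) * (real d1 + real d2))"
    using assms(4,7) by (auto simp: a0_def a1_def b0_def b1_def algebra_simps)
  then show ?thesis
    using has_field_derivative_transform_within[OF has_real_derivative_affine_quotient zero_less_one assms(8) fp_eq]
      \<open>D \<delta> > 0\<close> by (simp add: D_eq)
qed

theorem mainTheorem18:
  fixes V :: "'a set" and E :: "'a \<Rightarrow> 'a \<Rightarrow> bool" and d1 d2 :: nat
  assumes "simple_graph V E" and "connected_graph V E" and "card V \<ge> 1"
    and "d1 \<le> d2"
    and "\<forall>v\<in>V. deg V E v = d1 \<or> deg V E v = d2"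
    and "\<exists>v\<in>V. deg V E v = d1" and "\<exists>v\<in>V. deg V E v = d2"
  defines "n1 \<equiv> card {v \<in> V. deg V E v = d1}"
    and "n2 \<equiv> card {v \<in> V. deg V E v = d2}"
  defines "D \<equiv> (\<lambda>\<delta>::real. real d1 * real n2 + real d2 * real n1
                   + \<delta> * (real d1 - real d2) * (real n1 - real n2))"
  defines "Q \<equiv> (\<lambda>\<delta>::real. (real d2 - real d1) * (real d1 + real d2) / (D \<delta>)\<^sup>2)"
  shows "\<forall>\<delta>\<in>{0..1::real}.
           (\<forall>u\<in>V. deg V E u = d1 \<longrightarrow>
              ((\<lambda>\<delta>'. fp V E 1 \<delta>' {u}) has_real_derivative (- real n2 * Q \<delta>)) (at \<delta> within {0..1}))
         \<and> (\<forall>u\<in>V. deg V E u = d2 \<longrightarrow>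
              ((\<lambda>\<delta>'. fp V E 1 \<delta>' {u}) has_real_derivative (real n1 * Q \<delta>)) (at \<delta> within {0..1}))
         \<and> (d1 < d2 \<longrightarrow> - real n2 * Q \<delta> < 0 \<and> real n1 * Q \<delta> > 0)
         \<and> (\<not> d1 < d2 \<longrightarrow> - real n2 * Q \<delta> = 0 \<and> real n1 * Q \<delta> = 0)"
proof (rule ballI, goal_cases)
  case (1 \<delta>)
  then have \<delta>: "\<delta> \<in> {0..1}" .
  have "finite V"
    using assms(1) by (simp add: simple_graph_def)
  then have "n1 \<ge> 1" "n2 \<ge> 1"
    unfolding n1_def n2_def using card_degree_class_pos assms(6,7) by blast+
  show ?case
  proof (cases "d1 < d2")
    case True
    have "D \<delta> > 0"
      unfolding D_def using two_degree_denominator_pos[OF True \<open>n1 \<ge> 1\<close> \<open>n2 \<ge> 1\<close>] \<delta> by simp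
    then have "Q \<delta> > 0"
      unfolding Q_def using True by simp
    have deriv: "((\<lambda>t. fp V E 1 t {u}) has_real_derivative
        (if deg V E u = d1 then - real n2 else real n1) * Q \<delta>) (at \<delta> within {0..1})" if "u \<in> V" for u
      using has_real_derivative_fp_singleton_two_degrees[OF assms(1,2) True assms(5-7) that \<delta>]
      unfolding Q_def D_def n1_def n2_def .
    have "((\<lambda>t. fp V E 1 t {u}) has_real_derivative - real n2 * Q \<delta>) (at \<delta> within {0..1})"
      if "u \<in> V" "deg V E u = d1" for u
      using deriv[OF that(1)] that(2) by simp
    moreover have "((\<lambda>t. fp V E 1 t {u}) has_real_derivative real n1 * Q \<delta>) (at \<delta> within {0..1})"
      if "u \<in> V" "deg V E u = d2" for u
      using deriv[OF that(1)] that(2) True by simp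
    moreover have "- real n2 * Q \<delta> < 0 \<and> real n1 * Q \<delta> > 0"
      using \<open>Q \<delta> > 0\<close> \<open>n1 \<ge> 1\<close> \<open>n2 \<ge> 1\<close> by simp
    ultimately show ?thesis
      using True by blast
  next
    case False
    then have "d1 = d2"
      using assms(4) by simp
    then have "Q \<delta> = 0"
      unfolding Q_def by simp
    have regular: "\<forall>v\<in>V. deg V E v = d1"
      using assms(5) \<open>d1 = d2\<close> by simp
    show ?thesis
      using False \<open>Q \<delta> = 0\<close> has_real_derivative_fp_singleton_regular[OF assms(1,2) regular _ \<delta>]
      by simp
  qed
qed

end
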